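(* Let $f:\mathbb{R}\to\mathbb{R}$ be twice continuously differentiable, and let $u_L<u_U$ with $f''>0$ on $(u_L,u_U)$ or $f''<0$ on $(u_L,u_U)$. Let $x_1<x_2=x_3<x_4$, set $x_{23}=x_2$, and let $u_1,u_2,u_3,u_4\in[u_L,u_U]$. Then there exists $u_{23}$ in the closed interval with endpoints $u_2$ and $u_3$ such that $$(x_{23}-x_1)\,a(u_1,u_{23})+(x_4-x_{23})\,a(u_{23},u_4)=(x_2-x_1)\,a(u_1,u_2)+(x_3-x_2)\,a(u_2,u_3)+(x_4-x_3)\,a(u_3,u_4),$$ where $a$ is the nonlinear average defined below (note the middle term on the right vanishes since $x_2=x_3$).
   Context: For $g:\mathbb{R}\to\mathbb{R}$ write $[g(u)]_{a}^{b}=g(b)-g(a)$. For $u_1\neq u_2$ the nonlinear average is $a(u_1,u_2)=\frac{[f'(u)u-f(u)]_{u_1}^{u_2}}{[f'(u)]_{u_1}^{u_2}}=\frac{\int_{u_1}^{u_2}f''(u)u\,\mathrm{d}u}{\int_{u_1}^{u_2}f''(u)\,\mathrm{d}u}$, and $a(u,u)=u$. *)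

theory Defs
  imports "HOL-Analysis.Analysis"
begin

definition nl_avg :: "(real \<Rightarrow> real) \<Rightarrow> (real \<Rightarrow> real) \<Rightarrow> real \<Rightarrow> real \<Rightarrow> real" where
  "nl_avg f f' u1 u2 =
     (if u1 = u2 then u1
      else ((f' u2 * u2 - f u2) - (f' u1 * u1 - f u1)) / (f' u2 - f' u1))"

end

theory Submission
  imports Defs
begin

text \<open>Writing \<open>G u = f' u * u - f u\<close>, we have \<open>G' = f'' * u\<close>, so \<open>nl_avg f f' p q\<close> is the
  \<open>f''\<close>-weighted mean of \<open>u\<close> over the interval between \<open>p\<close> and \<open>q\<close>. Where \<open>f'' > 0\<close> this mean
  lies between \<open>p\<close> and \<open>q\<close>, and splitting the interval at an intermediate point exhibits it as
  a mediant of the two partial means, so it is monotone in each argument; it is also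
  continuous, on the diagonal because it is squeezed between its arguments.
  The left-hand side of the claim is then a continuous function of \<open>u23\<close> which lies below the
  right-hand side at \<open>min u2 u3\<close> and above it at \<open>max u2 u3\<close>, and the intermediate value
  theorem gives \<open>u23\<close>. The concave case reduces to the convex one since replacing \<open>f\<close> by
  \<open>-f\<close> does not change the average.\<close>

lemma nl_avg_commute: "nl_avg f f' p q = nl_avg f f' q p"
proof -
  have "(A - B) / (C - D) = (B - A) / (D - C)" for A B C D :: real
    by (metis minus_diff_eq minus_divide_divide)
  then show ?thesis
    unfolding nl_avg_def by auto
qed

lemma nl_avg_uminus: "nl_avg (\<lambda>u. - f u) (\<lambda>u. - f' u) p q = nl_avg f f' p q"
proof (cases "f' q = f' p")
  case False
  then have "f' q - f' p \<noteq> 0" by simp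
  then show ?thesis unfolding nl_avg_def by (simp add: field_simps)
qed (simp add: nl_avg_def)

lemma mediant_between:
  fixes a1 a2 b1 b2 :: real
  assumes "b1 > 0" "b2 > 0" "a1 * b2 \<le> a2 * b1"
  shows "a1 / b1 \<le> (a1 + a2) / (b1 + b2)" "(a1 + a2) / (b1 + b2) \<le> a2 / b2"
  using assms by (simp_all add: divide_simps algebra_simps)

context
  fixes f f' f'' :: "real \<Rightarrow> real" and uL uU :: real
  assumes f': "\<And>u. (f has_real_derivative f' u) (at u)"
    and f'': "\<And>u. (f' has_real_derivative f'' u) (at u)"
    and convex: "\<forall>u\<in>{uL<..<uU}. f'' u > 0"
begin

lemma deriv_strict_mono:
  assumes "p \<in> {uL..uU}" "q \<in> {uL..uU}" "p < q"
  shows "f' p < f' q"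
proof -
  obtain z where z: "p < z" "z < q" "f' q - f' p = (q - p) * f'' z"
    using MVT2[OF \<open>p < q\<close>, of f' f''] f'' by blast
  have "f'' z > 0" using convex z assms by auto
  then have "(q - p) * f'' z > 0" using \<open>p < q\<close> by simp
  with z show ?thesis by linarith
qed

lemma deriv_eq_iff:
  assumes "p \<in> {uL..uU}" "q \<in> {uL..uU}"
  shows "f' p = f' q \<longleftrightarrow> p = q"
  using deriv_strict_mono[OF assms] deriv_strict_mono[OF assms(2,1)]
  by (cases p q rule: linorder_cases) auto

text \<open>The two bounds come from the mean value theorem applied to \<open>G t - p f' t\<close> and
  \<open>q f' t - G t\<close>, whose derivatives \<open>f'' t (t - p)\<close> and \<open>f'' t (q - t)\<close> are positive on \<open>(p, q)\<close>.\<close>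
lemma nl_avg_numerator_bounds:
  assumes p: "p \<in> {uL..uU}" and q: "q \<in> {uL..uU}" and "p \<le> q"
  shows "p * (f' q - f' p) \<le> (f' q * q - f q) - (f' p * p - f p)"
    and "(f' q * q - f q) - (f' p * p - f p) \<le> q * (f' q - f' p)"
proof -
  have "p * (f' q - f' p) \<le> (f' q * q - f q) - (f' p * p - f p)
      \<and> (f' q * q - f q) - (f' p * p - f p) \<le> q * (f' q - f' p)"
  proof (cases "p = q")
    case False
    with \<open>p \<le> q\<close> have pq: "p < q" by simp
    have deriv_lower: "((\<lambda>t. f' t * t - f t - p * f' t) has_real_derivative f'' t * (t - p)) (at t)"
      and deriv_upper: "((\<lambda>t. q * f' t - (f' t * t - f t)) has_real_derivative f'' t * (q - t)) (at t)" for t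
      using f' f'' by (auto intro!: derivative_eq_intros simp: algebra_simps)
    obtain z where z: "p < z" "z < q"
        "(f' q * q - f q - p * f' q) - (f' p * p - f p - p * f' p) = (q - p) * (f'' z * (z - p))"
      using MVT2[OF pq, of "\<lambda>t. f' t * t - f t - p * f' t" "\<lambda>t. f'' t * (t - p)"] deriv_lower
      by blast
    obtain w where w: "p < w" "w < q"
        "(q * f' q - (f' q * q - f q)) - (q * f' p - (f' p * p - f p)) = (q - p) * (f'' w * (q - w))"
      using MVT2[OF pq, of "\<lambda>t. q * f' t - (f' t * t - f t)" "\<lambda>t. f'' t * (q - t)"] deriv_upper
      by blast
    have "f'' z > 0" "f'' w > 0" using convex z w p q by auto
    then have "(q - p) * (f'' z * (z - p)) \<ge> 0" "(q - p) * (f'' w * (q - w)) \<ge> 0"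
      using z w pq by auto
    moreover have "(f' q * q - f q) - (f' p * p - f p) - p * (f' q - f' p)
        = (q - p) * (f'' z * (z - p))"
      using z(3) by (simp add: algebra_simps)
    moreover have "q * (f' q - f' p) - ((f' q * q - f q) - (f' p * p - f p))
        = (q - p) * (f'' w * (q - w))"
      using w(3) by (simp add: algebra_simps)
    ultimately show ?thesis by linarith
  qed simp
  then show "p * (f' q - f' p) \<le> (f' q * q - f q) - (f' p * p - f p)"
    and "(f' q * q - f q) - (f' p * p - f p) \<le> q * (f' q - f' p)"
    by auto
qed

lemma nl_avg_between:
  assumes p: "p \<in> {uL..uU}" and q: "q \<in> {uL..uU}" and "p \<le> q"
  shows "p \<le> nl_avg f f' p q" "nl_avg f f' p q \<le> q"
proof -
  have "p \<le> nl_avg f f' p q \<and> nl_avg f f' p q \<le> q"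
  proof (cases "p = q")
    case False
    with \<open>p \<le> q\<close> have "f' q - f' p > 0" using deriv_strict_mono[OF p q] by simp
    with nl_avg_numerator_bounds[OF assms] False show ?thesis
      unfolding nl_avg_def by (simp add: pos_le_divide_eq pos_divide_le_eq mult.commute)
  qed (simp add: nl_avg_def)
  then show "p \<le> nl_avg f f' p q" "nl_avg f f' p q \<le> q" by auto
qed

lemma nl_avg_dist_le:
  assumes "p \<in> {uL..uU}" "q \<in> {uL..uU}"
  shows "\<bar>nl_avg f f' p q - p\<bar> \<le> \<bar>q - p\<bar>"
  using nl_avg_between[OF assms] nl_avg_between[OF assms(2,1)] nl_avg_commute[of f f' p q]
  by (cases "p \<le> q") auto

lemma nl_avg_mediant:
  assumes p: "p \<in> {uL..uU}" and r: "r \<in> {uL..uU}" and "p < q" "q < r"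
  shows "nl_avg f f' p q \<le> nl_avg f f' p r" "nl_avg f f' p r \<le> nl_avg f f' q r"
proof -
  have q: "q \<in> {uL..uU}" using assms by auto
  define N1 where "N1 = (f' q * q - f q) - (f' p * p - f p)"
  define N2 where "N2 = (f' r * r - f r) - (f' q * q - f q)"
  define D1 where "D1 = f' q - f' p"
  define D2 where "D2 = f' r - f' q"
  have D: "D1 > 0" "D2 > 0"
    using deriv_strict_mono[OF p q] deriv_strict_mono[OF q r] assms D1_def D2_def by auto
  have "N1 * D2 \<le> q * D1 * D2"
    using nl_avg_numerator_bounds(2)[OF p q] \<open>p < q\<close> D N1_def D1_def by simp
  also have "\<dots> \<le> N2 * D1"
    using nl_avg_numerator_bounds(1)[OF q r] \<open>q < r\<close> D N2_def D2_def by simp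
  finally have "N1 * D2 \<le> N2 * D1" .
  moreover have "nl_avg f f' p q = N1 / D1" "nl_avg f f' q r = N2 / D2"
    "nl_avg f f' p r = (N1 + N2) / (D1 + D2)"
    using assms unfolding nl_avg_def N1_def N2_def D1_def D2_def by auto
  ultimately show "nl_avg f f' p q \<le> nl_avg f f' p r" "nl_avg f f' p r \<le> nl_avg f f' q r"
    using mediant_between[OF D] by simp_all
qed

lemma nl_avg_mono_right:
  assumes w: "w \<in> {uL..uU}" and v: "v \<in> {uL..uU}" and v': "v' \<in> {uL..uU}" and "v \<le> v'"
  shows "nl_avg f f' w v \<le> nl_avg f f' w v'"
proof -
  consider "w < v" "v < v'" | "v < v'" "v' < w" | "v \<le> w" "w \<le> v'" | "v = v'"
    using \<open>v \<le> v'\<close> by linarith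
  then show ?thesis
  proof cases
    case 1
    then show ?thesis using nl_avg_mediant(1)[OF w v'] by simp
  next
    case 2
    then show ?thesis
      using nl_avg_mediant(2)[OF v w, of v'] nl_avg_commute[of f f' w] by simp
  next
    case 3
    then show ?thesis
      using nl_avg_between(1)[OF w v'] nl_avg_between(2)[OF v w] nl_avg_commute[of f f' v w]
      by linarith
  qed simp
qed

lemma nl_avg_mono_left:
  assumes "v \<in> {uL..uU}" "v' \<in> {uL..uU}" "w \<in> {uL..uU}" "v \<le> v'"
  shows "nl_avg f f' v w \<le> nl_avg f f' v' w"
  using nl_avg_mono_right[OF assms(3,1,2,4)] by (simp add: nl_avg_commute[of f f' _ w])

lemma continuous_on_nl_avg:
  assumes w: "w \<in> {uL..uU}"
  shows "continuous_on {uL..uU} (nl_avg f f' w)"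
  unfolding continuous_on_eq_continuous_within
proof
  fix v0 assume v0: "v0 \<in> {uL..uU}"
  show "continuous (at v0 within {uL..uU}) (nl_avg f f' w)"
  proof (cases "v0 = w")
    case True
    have dist_le: "dist (nl_avg f f' w v) (nl_avg f f' w w) \<le> dist v w" if "v \<in> {uL..uU}" for v
      using nl_avg_dist_le[OF w that] by (simp add: dist_real_def nl_avg_def[of f f' w w])
    show ?thesis
      unfolding continuous_within_eps_delta True
    proof (intro allI impI)
      fix e :: real assume "e > 0"
      then show "\<exists>d>0. \<forall>v\<in>{uL..uU}. dist v w < d \<longrightarrow>
          dist (nl_avg f f' w v) (nl_avg f f' w w) < e"
        using dist_le by (intro exI[of _ e]) force
    qed
  next
    case False
    have "isCont f x" "isCont f' x" for x
      using f' f'' DERIV_isCont by blast+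
    moreover have "f' v0 - f' w \<noteq> 0"
      using deriv_eq_iff[OF v0 w] False by simp
    ultimately have "isCont (\<lambda>v. ((f' v * v - f v) - (f' w * w - f w)) / (f' v - f' w)) v0"
      by (intro continuous_intros) auto
    moreover have eq: "\<forall>\<^sub>F v in nhds v0.
        nl_avg f f' w v = ((f' v * v - f v) - (f' w * w - f w)) / (f' v - f' w)"
      using t1_space_nhds[OF False] by eventually_elim (simp add: nl_avg_def)
    ultimately have "isCont (nl_avg f f' w) v0"
      using isCont_cong[OF eq] by simp
    then show ?thesis
      by (rule continuous_at_imp_continuous_at_within)
  qed
qed

lemma nl_avg_intermediate_state:
  assumes u: "u1 \<in> {uL..uU}" "u2 \<in> {uL..uU}" "u3 \<in> {uL..uU}" "u4 \<in> {uL..uU}"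
    and c: "c1 > 0" "c2 > 0"
  shows "\<exists>v \<in> {min u2 u3..max u2 u3}.
           c1 * nl_avg f f' u1 v + c2 * nl_avg f f' v u4
         = c1 * nl_avg f f' u1 u2 + c2 * nl_avg f f' u3 u4"
proof -
  define g where "g v = c1 * nl_avg f f' u1 v + c2 * nl_avg f f' u4 v" for v
  define T where "T = c1 * nl_avg f f' u1 u2 + c2 * nl_avg f f' u3 u4"
  have lo: "min u2 u3 \<in> {uL..uU}" and hi: "max u2 u3 \<in> {uL..uU}" using u by auto
  then have sub: "{min u2 u3..max u2 u3} \<subseteq> {uL..uU}" by auto
  have "continuous_on {min u2 u3..max u2 u3} g"
    unfolding g_def using continuous_on_nl_avg[OF u(1)] continuous_on_nl_avg[OF u(4)]
    by (intro continuous_on_add continuous_on_mult_left continuous_on_subset[OF _ sub])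
  moreover have "nl_avg f f' u1 (min u2 u3) \<le> nl_avg f f' u1 u2"
    and "nl_avg f f' u4 (min u2 u3) \<le> nl_avg f f' u3 u4"
    using nl_avg_mono_right[OF u(1) lo u(2)] nl_avg_mono_left[OF lo u(3) u(4)]
    by (simp_all add: nl_avg_commute[of f f' u4])
  then have "g (min u2 u3) \<le> T"
    unfolding g_def T_def using c by (intro add_mono mult_left_mono) auto
  moreover have "nl_avg f f' u1 u2 \<le> nl_avg f f' u1 (max u2 u3)"
    and "nl_avg f f' u3 u4 \<le> nl_avg f f' u4 (max u2 u3)"
    using nl_avg_mono_right[OF u(1) u(2) hi] nl_avg_mono_left[OF u(3) hi u(4)]
    by (simp_all add: nl_avg_commute[of f f' u4])
  then have "T \<le> g (max u2 u3)"
    unfolding g_def T_def using c by (intro add_mono mult_left_mono) auto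
  ultimately obtain v where "min u2 u3 \<le> v" "v \<le> max u2 u3" "g v = T"
    using IVT'[of g "min u2 u3" T "max u2 u3"] by (meson min.cobounded1 max.cobounded1 order.trans)
  then show ?thesis
    unfolding g_def T_def by (auto simp: nl_avg_commute[of f f' u4])
qed

end

theorem lemma3:
  fixes f f' f'' :: "real \<Rightarrow> real"
    and uL uU x1 x2 x3 x4 x23 u1 u2 u3 u4 :: real
  assumes f': "\<And>u. (f has_real_derivative f' u) (at u)"
    and f'': "\<And>u. (f' has_real_derivative f'' u) (at u)"
    and cont: "continuous_on UNIV f''"
    and uLU: "uL < uU"
    and sign: "(\<forall>u\<in>{uL<..<uU}. f'' u > 0) \<or> (\<forall>u\<in>{uL<..<uU}. f'' u < 0)"
    and x: "x1 < x2" "x2 = x3" "x3 < x4"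
    and x23: "x23 = x2"
    and u: "u1 \<in> {uL..uU}" "u2 \<in> {uL..uU}" "u3 \<in> {uL..uU}" "u4 \<in> {uL..uU}"
  shows "\<exists>u23 \<in> {min u2 u3..max u2 u3}.
           (x23 - x1) * nl_avg f f' u1 u23 + (x4 - x23) * nl_avg f f' u23 u4
         = (x2 - x1) * nl_avg f f' u1 u2 + (x3 - x2) * nl_avg f f' u2 u3
           + (x4 - x3) * nl_avg f f' u3 u4"
proof -
  have c: "x2 - x1 > 0" "x4 - x2 > 0" using x by auto
  have "\<exists>v \<in> {min u2 u3..max u2 u3}.
          (x2 - x1) * nl_avg f f' u1 v + (x4 - x2) * nl_avg f f' v u4
        = (x2 - x1) * nl_avg f f' u1 u2 + (x4 - x2) * nl_avg f f' u3 u4"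
    using sign
  proof
    assume "\<forall>u\<in>{uL<..<uU}. f'' u > 0"
    from nl_avg_intermediate_state[OF f' f'' this u c] show ?thesis .
  next
    assume "\<forall>u\<in>{uL<..<uU}. f'' u < 0"
    then have "\<forall>u\<in>{uL<..<uU}. - f'' u > 0" by auto
    moreover have "((\<lambda>u. - f u) has_real_derivative - f' u) (at u)"
      and "((\<lambda>u. - f' u) has_real_derivative - f'' u) (at u)" for u
      using f' f'' by (auto intro: derivative_intros)
    ultimately show ?thesis
      using nl_avg_intermediate_state[of "\<lambda>u. - f u" "\<lambda>u. - f' u" "\<lambda>u. - f'' u", OF _ _ _ u c]
      unfolding nl_avg_uminus by blast
  qed
  then show ?thesis using x(2) x23 by simp
qed

end
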